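(* Under the assumption $N_s,N_r\ge 2K+1$, let $\mathbf L_K$ denote the operator $\mathbf L$ of truncation order $K$. Then there is a constant $C>0$ independent of $K$ (depending on $k_0R$) such that $$\mathrm{cond}(\mathbf L_K)=\frac{\max_{|n|\le K}|d_n|}{\min_{|n|\le K}|d_n|}\le C\,(C_RK)^K\quad\text{for all sufficiently large }K,$$ where $C_R=2/(ek_0R)$.
   Context: Let $k_0>0$, $R>0$, $z_0\in\mathbb R^2$, $K\in\mathbb N$, $N_s,N_r\in\mathbb N$. Let $\theta_s=2\pi s/N_s$, $\xi_s=(\cos\theta_s,\sin\theta_s)$, $\theta_r=2\pi r/N_r$. Define $\mathbf A=(A_{sm})\in\mathbb C^{N_s\times(2K+1)}$, $\mathbf B=(B_{rn})\in\mathbb C^{N_r\times(2K+1)}$, $m,n=-K,\dots,K$, by $A_{sm}=e^{ik_0\xi_s\cdot z_0}e^{im(\pi/2-\theta_s)}$, $B_{rn}=\frac i4\overline{H_n^{(1)}(k_0R)}e^{-in\theta_r}$, with $H_n^{(1)}$ the Hankel function of the first kind, and $d_n=\frac i4H_n^{(1)}(k_0R)$. The operator $\mathbf L:\mathbb C^{(2K+1)\times(2K+1)}\to\mathbb C^{N_s\times N_r}$ is $\mathbf L(\mathbf X)=\mathbf A\mathbf X\mathbf B^H$ (Frobenius norms), and $\mathrm{cond}$ denotes the ratio of its largest to smallest singular value. *)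

theory Defs
  imports "HOL-Analysis.Analysis"
begin

text \<open>Bessel functions of integer order for real argument x > 0, via the
  integral representations DLMF 10.9.2 / 10.9.7 (specialised to integer order).\<close>

definition besselJ :: "int \<Rightarrow> real \<Rightarrow> real" where
  "besselJ n x = (1 / pi) * (LBINT t:{0..pi}. cos (real_of_int n * t - x * sin t))"

definition besselY :: "int \<Rightarrow> real \<Rightarrow> real" where
  "besselY n x =
     (1 / pi) * (LBINT t:{0..pi}. sin (x * sin t - real_of_int n * t))
   - (1 / pi) * (LBINT t:{0<..}. (exp (real_of_int n * t) + (-1) powi n * exp (- real_of_int n * t))
                                  * exp (- x * sinh t))"

definition hankel1 :: "int \<Rightarrow> real \<Rightarrow> complex" where
  "hankel1 n x = Complex (besselJ n x) (besselY n x)"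

text \<open>Matrices are represented as functions of integer indices; entries outside the
  relevant index ranges are irrelevant.  Rows s = 0..N_s-1, r = 0..N_r-1; columns
  m,n = -K..K.\<close>

definition Amat :: "real \<Rightarrow> real \<times> real \<Rightarrow> nat \<Rightarrow> int \<Rightarrow> int \<Rightarrow> complex" where
  "Amat k0 z0 Ns s m =
     (let \<theta> = 2 * pi * real_of_int s / real Ns in
      cis (k0 * (cos \<theta> * fst z0 + sin \<theta> * snd z0)) * cis (real_of_int m * (pi / 2 - \<theta>)))"

definition Bmat :: "real \<Rightarrow> real \<Rightarrow> nat \<Rightarrow> int \<Rightarrow> int \<Rightarrow> complex" where
  "Bmat k0 R Nr r n =
     (let \<theta> = 2 * pi * real_of_int r / real Nr in
      (\<i> / 4) * cnj (hankel1 n (k0 * R)) * cis (- real_of_int n * \<theta>))"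

definition dcoef :: "real \<Rightarrow> real \<Rightarrow> int \<Rightarrow> complex" where
  "dcoef k0 R n = (\<i> / 4) * hankel1 n (k0 * R)"

text \<open>L(X) = A X B^H, entry (s,r) = sum_{m,n} A_{sm} X_{mn} conj(B_{rn}).\<close>
definition Lop :: "real \<Rightarrow> real \<Rightarrow> real \<times> real \<Rightarrow> nat \<Rightarrow> nat \<Rightarrow> nat
                   \<Rightarrow> (int \<Rightarrow> int \<Rightarrow> complex) \<Rightarrow> (int \<Rightarrow> int \<Rightarrow> complex)" where
  "Lop k0 R z0 K Ns Nr X = (\<lambda>s r.
     \<Sum>m\<in>{-int K..int K}. \<Sum>n\<in>{-int K..int K}.
        Amat k0 z0 Ns s m * X m n * cnj (Bmat k0 R Nr r n))"

definition frob :: "int set \<Rightarrow> int set \<Rightarrow> (int \<Rightarrow> int \<Rightarrow> complex) \<Rightarrow> real" where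
  "frob I J X = sqrt (\<Sum>i\<in>I. \<Sum>j\<in>J. (cmod (X i j))\<^sup>2)"

definition Lratios :: "real \<Rightarrow> real \<Rightarrow> real \<times> real \<Rightarrow> nat \<Rightarrow> nat \<Rightarrow> nat \<Rightarrow> real set" where
  "Lratios k0 R z0 K Ns Nr =
     {frob {0..<int Ns} {0..<int Nr} (Lop k0 R z0 K Ns Nr X) / frob {-int K..int K} {-int K..int K} X
      | X. frob {-int K..int K} {-int K..int K} X \<noteq> 0}"

text \<open>Condition number = largest singular value / smallest singular value of the linear map
  L : C^{(2K+1)^2} -> C^{Ns x Nr}.  Since the domain dimension (2K+1)^2 does not exceed the
  codomain dimension Ns*Nr under the standing assumption, these are the maximal and minimal
  stretch factors ||L X|| / ||X||.\<close>
definition condL :: "real \<Rightarrow> real \<Rightarrow> real \<times> real \<Rightarrow> nat \<Rightarrow> nat \<Rightarrow> nat \<Rightarrow> real" where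
  "condL k0 R z0 K Ns Nr = Sup (Lratios k0 R z0 K Ns Nr) / Inf (Lratios k0 R z0 K Ns Nr)"

end

theory Submission
  imports Defs "HOL-Real_Asymp.Real_Asymp"
begin

(* Sampling at N >= 2K+1 equispaced angles makes the discrete Fourier vectors of the
   frequencies |n| <= K orthogonal, so L is sqrt (N_s N_r) times an isometry composed with the
   column scaling X -> X diag(d_n); hence cond L = max |d_n| / min |d_n|.
   For the growth, the tail integral in Schlaefli's formula for Y_n is at most a constant
   (depending on k0 R) times (2|n| / (e k0 R))^|n|, by Laplace's method with an envelope of
   the form 1 / cosh; and for large |n| the same integral forces |Y_n| >= 1, so the minimum
   of |d_n| stays away from zero. *)

section \<open>Discrete orthogonality and the structure of L\<close>

lemma sum_cis_roots_of_unity: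
  fixes k :: int
  assumes "N > 0"
  shows "(\<Sum>r\<in>{0..<int N}. cis (real_of_int k * (2 * pi * real_of_int r / real N)))
           = (if int N dvd k then of_nat N else 0)"
proof -
  define \<omega> where "\<omega> = cis (2 * pi * real_of_int k / real N)"
  have "{0..<int N} = int ` {..<N}"
    by (simp add: image_int_atLeastLessThan lessThan_atLeast0)
  then have "(\<Sum>r\<in>{0..<int N}. cis (real_of_int k * (2 * pi * real_of_int r / real N)))
          = (\<Sum>j<N. cis (real j * (2 * pi * real_of_int k / real N)))"
    by (simp add: sum.reindex mult_ac)
  also have "\<dots> = (\<Sum>j<N. \<omega> ^ j)"
    by (simp add: \<omega>_def Complex.DeMoivre field_simps)
  also have "\<dots> = (if int N dvd k then of_nat N else 0)"
  proof (cases "int N dvd k")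
    case True
    then obtain j where "k = int N * j" by blast
    then have "2 * pi * real_of_int k / real N = 2 * pi * real_of_int j"
      using assms by (simp add: field_simps)
    then have "\<omega> = 1"
      by (simp add: \<omega>_def)
    then show ?thesis using True by simp
  next
    case False
    have "\<omega> \<noteq> 1"
    proof
      assume "\<omega> = 1"
      then have "cos (2 * pi * real_of_int k / real N) = 1"
        unfolding \<omega>_def by (metis cis.sel(1) one_complex.sel(1))
      then obtain j :: int where "2 * pi * real_of_int k / real N = real_of_int j * 2 * pi"
        by (auto simp: cos_one_2pi_int)
      then have "real_of_int k = real_of_int j * real N"
        using assms by (simp add: field_simps)
      then have "k = j * int N"
        by (metis of_int_eq_iff of_int_mult of_int_of_nat_eq)
      then show False using False by simp
    qed
    moreover have "\<omega> ^ N = 1"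
      using assms by (simp add: \<omega>_def Complex.DeMoivre)
    ultimately show ?thesis using False by (simp add: geometric_sum)
  qed
  finally show ?thesis .
qed

lemma discrete_parseval:
  fixes c :: "'a \<Rightarrow> complex" and \<omega> :: "'a \<Rightarrow> int"
  assumes "N > 0" and "finite I"
    and distinct: "\<And>n n'. n \<in> I \<Longrightarrow> n' \<in> I \<Longrightarrow> int N dvd \<omega> n - \<omega> n' \<Longrightarrow> n = n'"
  shows "(\<Sum>r\<in>{0..<int N}.
            (cmod (\<Sum>n\<in>I. c n * cis (real_of_int (\<omega> n) * (2 * pi * real_of_int r / real N))))\<^sup>2)
         = real N * (\<Sum>n\<in>I. (cmod (c n))\<^sup>2)"
proof -
  define e where "e n r = cis (real_of_int (\<omega> n) * (2 * pi * real_of_int r / real N))" for n r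
  have e_cnj: "e n r * cnj (e n' r) = cis (real_of_int (\<omega> n - \<omega> n') * (2 * pi * real_of_int r / real N))"
    for n n' r
    by (simp add: e_def cis_cnj cis_mult algebra_simps diff_divide_distrib)
  have orth: "(\<Sum>r\<in>{0..<int N}. e n r * cnj (e n' r)) = (if n = n' then of_nat N else 0)"
    if "n \<in> I" "n' \<in> I" for n n'
    using sum_cis_roots_of_unity[OF \<open>N > 0\<close>, of "\<omega> n - \<omega> n'"] distinct[OF that]
    by (auto simp: e_cnj)
  have "complex_of_real (\<Sum>r\<in>{0..<int N}. (cmod (\<Sum>n\<in>I. c n * e n r))\<^sup>2)
      = (\<Sum>r\<in>{0..<int N}. (\<Sum>n\<in>I. c n * e n r) * cnj (\<Sum>n'\<in>I. c n' * e n' r))"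
    unfolding of_real_sum by (intro sum.cong refl) (rule complex_norm_square)
  also have "\<dots> = (\<Sum>r\<in>{0..<int N}. \<Sum>n\<in>I. \<Sum>n'\<in>I. c n * cnj (c n') * (e n r * cnj (e n' r)))"
    by (simp add: cnj_sum sum_product mult_ac)
  also have "\<dots> = (\<Sum>n\<in>I. \<Sum>r\<in>{0..<int N}. \<Sum>n'\<in>I. c n * cnj (c n') * (e n r * cnj (e n' r)))"
    by (rule sum.swap)
  also have "\<dots> = (\<Sum>n\<in>I. \<Sum>n'\<in>I. \<Sum>r\<in>{0..<int N}. c n * cnj (c n') * (e n r * cnj (e n' r)))"
    by (rule sum.cong[OF refl], rule sum.swap)
  also have "\<dots> = (\<Sum>n\<in>I. \<Sum>n'\<in>I. c n * cnj (c n') * (\<Sum>r\<in>{0..<int N}. e n r * cnj (e n' r)))"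
    by (simp add: sum_distrib_left)
  also have "\<dots> = (\<Sum>n\<in>I. \<Sum>n'\<in>I. if n' = n then c n * cnj (c n') * of_nat N else 0)"
    by (intro sum.cong refl) (simp add: orth)
  also have "\<dots> = (\<Sum>n\<in>I. c n * cnj (c n) * of_nat N)"
    using \<open>finite I\<close> by simp
  also have "\<dots> = complex_of_real (real N * (\<Sum>n\<in>I. (cmod (c n))\<^sup>2))"
    by (simp add: sum_distrib_left mult_ac flip: complex_norm_square)
  finally show ?thesis
    unfolding e_def of_real_eq_iff .
qed

lemma eq_if_dvd_diff_in_symmetric_range:
  fixes n n' :: int
  assumes "n \<in> {-int K..int K}" "n' \<in> {-int K..int K}" "N \<ge> 2 * K + 1" "int N dvd n - n'"
  shows "n = n'"
proof (rule ccontr)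
  assume "n \<noteq> n'"
  then have "\<bar>int N\<bar> \<le> \<bar>n - n'\<bar>"
    by (intro dvd_imp_le_int assms(4)) simp
  then have "int N \<le> \<bar>n - n'\<bar>"
    by simp
  moreover have "\<bar>n - n'\<bar> \<le> 2 * int K"
    using assms(1,2) by auto
  ultimately show False
    using assms(3) by linarith
qed

lemma Lop_eq_double_dft:
  "Lop k0 R z0 K Ns Nr X s r =
     - cis (k0 * (cos (2 * pi * real_of_int s / real Ns) * fst z0
                  + sin (2 * pi * real_of_int s / real Ns) * snd z0))
     * (\<Sum>n\<in>{-int K..int K}.
          (\<Sum>m\<in>{-int K..int K}. cis (real_of_int m * (pi / 2)) * X m n * dcoef k0 R n
                 * cis (real_of_int (- m) * (2 * pi * real_of_int s / real Ns)))
          * cis (real_of_int n * (2 * pi * real_of_int r / real Nr)))"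
proof -
  define I where "I = {-int K..int K}"
  define \<theta>s where "\<theta>s = 2 * pi * real_of_int s / real Ns"
  define \<theta>r where "\<theta>r = 2 * pi * real_of_int r / real Nr"
  define e where "e = cis (k0 * (cos \<theta>s * fst z0 + sin \<theta>s * snd z0))"
  have A: "Amat k0 z0 Ns s m = e * cis (real_of_int m * (pi / 2)) * cis (real_of_int (- m) * \<theta>s)" for m
    by (simp add: Amat_def Let_def e_def \<theta>s_def cis_mult algebra_simps)
  have B: "cnj (Bmat k0 R Nr r n) = - dcoef k0 R n * cis (real_of_int n * \<theta>r)" for n
    by (simp add: Bmat_def Let_def dcoef_def \<theta>r_def cis_cnj)
  have "Lop k0 R z0 K Ns Nr X s r
      = (\<Sum>m\<in>I. \<Sum>n\<in>I. - e * (cis (real_of_int m * (pi / 2)) * X m n * dcoef k0 R n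
                 * cis (real_of_int (- m) * \<theta>s) * cis (real_of_int n * \<theta>r)))"
    unfolding Lop_def I_def[symmetric] A B by (intro sum.cong refl) (simp add: mult_ac)
  also have "\<dots> = - e * (\<Sum>n\<in>I. (\<Sum>m\<in>I. cis (real_of_int m * (pi / 2)) * X m n * dcoef k0 R n
                 * cis (real_of_int (- m) * \<theta>s)) * cis (real_of_int n * \<theta>r))"
    by (subst sum.swap) (simp add: sum_distrib_left sum_distrib_right)
  finally show ?thesis
    unfolding I_def e_def \<theta>s_def \<theta>r_def .
qed

lemma frob_Lop:
  assumes Ns: "Ns \<ge> 2 * K + 1" and Nr: "Nr \<ge> 2 * K + 1"
  shows "frob {0..<int Ns} {0..<int Nr} (Lop k0 R z0 K Ns Nr X)
       = sqrt (real Ns * real Nr) * frob {-int K..int K} {-int K..int K} (\<lambda>m n. X m n * dcoef k0 R n)"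
proof -
  define I where "I = {-int K..int K}"
  have "Ns > 0" "Nr > 0" "finite I"
    using Ns Nr by (auto simp: I_def)
  have dist_Nr: "n = n'" if "n \<in> I" "n' \<in> I" "int Nr dvd n - n'" for n n'
    using eq_if_dvd_diff_in_symmetric_range[OF _ _ Nr] that by (simp add: I_def)
  have dist_Ns: "m = m'" if "m \<in> I" "m' \<in> I" "int Ns dvd - m - - m'" for m m'
    using eq_if_dvd_diff_in_symmetric_range[OF _ _ Ns, of m' m] that by (simp add: I_def)
  note parseval_r = discrete_parseval[where \<omega> = "\<lambda>n. n", OF \<open>Nr > 0\<close> \<open>finite I\<close> dist_Nr]
  note parseval_s = discrete_parseval[where \<omega> = uminus, OF \<open>Ns > 0\<close> \<open>finite I\<close> dist_Ns]
  define W where "W s n = (\<Sum>m\<in>I. cis (real_of_int m * (pi / 2)) * X m n * dcoef k0 R n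
                 * cis (real_of_int (- m) * (2 * pi * real_of_int s / real Ns)))" for s n
  have Lop_norm: "cmod (Lop k0 R z0 K Ns Nr X s r)
      = cmod (\<Sum>n\<in>I. W s n * cis (real_of_int n * (2 * pi * real_of_int r / real Nr)))" for s r
    unfolding Lop_eq_double_dft W_def I_def norm_mult norm_minus_cancel by simp
  have "(\<Sum>s\<in>{0..<int Ns}. \<Sum>r\<in>{0..<int Nr}. (cmod (Lop k0 R z0 K Ns Nr X s r))\<^sup>2)
      = (\<Sum>s\<in>{0..<int Ns}. real Nr * (\<Sum>n\<in>I. (cmod (W s n))\<^sup>2))"
    unfolding Lop_norm by (intro sum.cong refl) (rule parseval_r)
  also have "\<dots> = real Nr * (\<Sum>n\<in>I. \<Sum>s\<in>{0..<int Ns}. (cmod (W s n))\<^sup>2)"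
    by (subst sum.swap) (simp add: sum_distrib_left)
  also have "\<dots> = real Nr * (\<Sum>n\<in>I. real Ns * (\<Sum>m\<in>I. (cmod (X m n * dcoef k0 R n))\<^sup>2))"
    unfolding W_def
    by (intro sum.cong refl arg_cong2[where f = "(*)"]) (subst parseval_s; simp add: norm_mult)
  also have "\<dots> = real Ns * real Nr * (\<Sum>m\<in>I. \<Sum>n\<in>I. (cmod (X m n * dcoef k0 R n))\<^sup>2)"
    by (subst sum.swap) (simp add: sum_distrib_left mult_ac)
  finally show ?thesis
    unfolding frob_def I_def by (simp add: real_sqrt_mult)
qed

lemma frob_nonneg: "frob I J X \<ge> 0"
  by (simp add: frob_def sum_nonneg)

lemma frob_scale_columns_le:
  assumes "0 \<le> b" and "\<And>n. n \<in> J \<Longrightarrow> cmod (w n) \<le> b"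
  shows "frob I J (\<lambda>m n. X m n * w n) \<le> b * frob I J X"
proof -
  have "(\<Sum>m\<in>I. \<Sum>n\<in>J. (cmod (X m n * w n))\<^sup>2) \<le> (\<Sum>m\<in>I. \<Sum>n\<in>J. (cmod (X m n))\<^sup>2) * b\<^sup>2"
    unfolding sum_distrib_right using assms
    by (intro sum_mono) (auto simp: norm_mult power_mult_distrib intro!: mult_left_mono power_mono)
  then have "frob I J (\<lambda>m n. X m n * w n) \<le> sqrt ((\<Sum>m\<in>I. \<Sum>n\<in>J. (cmod (X m n))\<^sup>2) * b\<^sup>2)"
    unfolding frob_def by (rule real_sqrt_le_mono)
  also have "\<dots> = b * frob I J X"
    using assms(1) by (simp add: frob_def real_sqrt_mult)
  finally show ?thesis .
qed

lemma frob_scale_columns_ge: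
  assumes "0 \<le> a" and "\<And>n. n \<in> J \<Longrightarrow> a \<le> cmod (w n)"
  shows "a * frob I J X \<le> frob I J (\<lambda>m n. X m n * w n)"
proof -
  have "(\<Sum>m\<in>I. \<Sum>n\<in>J. (cmod (X m n))\<^sup>2) * a\<^sup>2 \<le> (\<Sum>m\<in>I. \<Sum>n\<in>J. (cmod (X m n * w n))\<^sup>2)"
    unfolding sum_distrib_right using assms
    by (intro sum_mono) (auto simp: norm_mult power_mult_distrib intro!: mult_left_mono power_mono)
  then have "sqrt ((\<Sum>m\<in>I. \<Sum>n\<in>J. (cmod (X m n))\<^sup>2) * a\<^sup>2) \<le> frob I J (\<lambda>m n. X m n * w n)"
    unfolding frob_def by (rule real_sqrt_le_mono)
  moreover have "sqrt ((\<Sum>m\<in>I. \<Sum>n\<in>J. (cmod (X m n))\<^sup>2) * a\<^sup>2) = a * frob I J X"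
    using assms(1) by (simp add: frob_def real_sqrt_mult)
  ultimately show ?thesis
    by simp
qed

lemma frob_single_entry:
  assumes "finite I" "finite J" "i \<in> I" "j \<in> J"
  shows "frob I J (\<lambda>m n. if m = i \<and> n = j then z else 0) = cmod z"
proof -
  have "(\<Sum>n\<in>J. (cmod (if m = i \<and> n = j then z else 0))\<^sup>2) = (if m = i then (cmod z)\<^sup>2 else 0)" for m
    using assms(2,4) by (cases "m = i") (simp_all add: if_distrib[of "\<lambda>z. (cmod z)\<^sup>2"] cong: if_cong)
  then show ?thesis
    using assms(1,3) by (simp add: frob_def)
qed

lemma Sup_Inf_ratios_column_scaling:
  fixes w :: "int \<Rightarrow> complex" and F :: "(int \<Rightarrow> int \<Rightarrow> complex) \<Rightarrow> real"
  assumes "finite I" "I \<noteq> {}" "finite J" "J \<noteq> {}" "c > 0"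
    and F: "\<And>X. F X = c * frob I J (\<lambda>m n. X m n * w n)"
  defines "S \<equiv> {F X / frob I J X | X. frob I J X \<noteq> 0}"
  shows "Sup S = c * (MAX n\<in>J. cmod (w n))" and "Inf S = c * (MIN n\<in>J. cmod (w n))"
proof -
  define hi where "hi = (MAX n\<in>J. cmod (w n))"
  define lo where "lo = (MIN n\<in>J. cmod (w n))"
  have hi: "cmod (w n) \<le> hi" and lo: "lo \<le> cmod (w n)" if "n \<in> J" for n
    using that \<open>finite J\<close> by (auto simp: hi_def lo_def)
  have "lo \<ge> 0" and "hi \<ge> 0"
    using \<open>finite J\<close> \<open>J \<noteq> {}\<close> by (auto simp: lo_def hi_def Max_ge_iff)
  have bounds: "c * lo \<le> y \<and> y \<le> c * hi" if "y \<in> S" for y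
  proof -
    obtain X where y: "y = F X / frob I J X" and X: "frob I J X \<noteq> 0"
      using \<open>y \<in> S\<close> by (auto simp: S_def)
    have "frob I J X > 0"
      using X frob_nonneg[of I J X] by linarith
    moreover have "lo * frob I J X \<le> frob I J (\<lambda>m n. X m n * w n)"
      by (rule frob_scale_columns_ge) (use \<open>lo \<ge> 0\<close> lo in auto)
    moreover have "frob I J (\<lambda>m n. X m n * w n) \<le> hi * frob I J X"
      by (rule frob_scale_columns_le) (use \<open>hi \<ge> 0\<close> hi in auto)
    ultimately show ?thesis
      using \<open>c > 0\<close> by (simp add: y F field_simps)
  qed
  obtain i where "i \<in> I"
    using \<open>I \<noteq> {}\<close> by blast
  have attained: "c * cmod (w j) \<in> S" if "j \<in> J" for j
  proof -
    define E where "E = (\<lambda>m n. if m = i \<and> n = j then 1 else 0 :: complex)"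
    have "(\<lambda>m n. E m n * w n) = (\<lambda>m n. if m = i \<and> n = j then w j else 0)"
      by (auto simp: E_def fun_eq_iff)
    then have "F E / frob I J E = c * cmod (w j)" and "frob I J E \<noteq> 0"
      using assms(1,3) \<open>i \<in> I\<close> that by (simp_all add: F E_def frob_single_entry)
    then show ?thesis
      unfolding S_def by (auto intro!: exI[of _ E])
  qed
  have "hi \<in> (\<lambda>n. cmod (w n)) ` J"
    unfolding hi_def using assms(3,4) by (intro Max_in) auto
  then obtain jhi where "jhi \<in> J" "cmod (w jhi) = hi"
    by auto
  then show "Sup S = c * hi"
    using attained bounds by (intro cSup_eq_maximum) auto
  have "lo \<in> (\<lambda>n. cmod (w n)) ` J"
    unfolding lo_def using assms(3,4) by (intro Min_in) auto
  then obtain jlo where "jlo \<in> J" "cmod (w jlo) = lo"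
    by auto
  then show "Inf S = c * lo"
    using attained bounds by (intro cInf_eq_minimum) auto
qed

lemma condL_eq_Max_div_Min:
  assumes "Ns \<ge> 2 * K + 1" and "Nr \<ge> 2 * K + 1"
  shows "condL k0 R z0 K Ns Nr
       = (MAX n\<in>{-int K..int K}. cmod (dcoef k0 R n)) / (MIN n\<in>{-int K..int K}. cmod (dcoef k0 R n))"
proof -
  have "Ns > 0" "Nr > 0"
    using assms by auto
  then have "sqrt (real Ns * real Nr) > 0"
    by simp
  note ratios = Sup_Inf_ratios_column_scaling[OF _ _ _ _ this frob_Lop[OF assms, of k0 R z0]]
  show ?thesis
    using \<open>Ns > 0\<close> \<open>Nr > 0\<close> by (simp add: condL_def Lratios_def ratios)
qed

section \<open>Laplace-type bounds for integrals of exp (m t - x sinh t)\<close>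

lemma has_integral_inverse_cosh:
  "((\<lambda>t. inverse (cosh ((t - c) / 2))) has_integral (2 * pi - 4 * arctan (exp (- c / 2)))) {0..}"
proof (rule has_integral_to_inf)
  define F where "F t = 4 * arctan (exp ((t - c) / 2))" for t
  have F': "(F has_real_derivative inverse (cosh ((t - c) / 2))) (at t)" for t
  proof -
    have "(F has_real_derivative 4 * (inverse (1 + (exp ((t - c) / 2))\<^sup>2) * (exp ((t - c) / 2) * (1 / 2)))) (at t)"
      unfolding F_def by (auto intro!: derivative_eq_intros)
    moreover have "4 * (inverse (1 + u\<^sup>2) * (u * (1 / 2))) = inverse ((u + inverse u) / 2)"
      if "u > 0" for u :: real
    proof -
      have "1 + u\<^sup>2 > 0"
        by (simp add: add_pos_nonneg)
      then show ?thesis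
        using that by (simp add: field_simps power2_eq_square)
    qed
    then have "4 * (inverse (1 + (exp ((t - c) / 2))\<^sup>2) * (exp ((t - c) / 2) * (1 / 2)))
                   = inverse (cosh ((t - c) / 2))"
      by (simp add: cosh_field_def exp_minus)
    ultimately show ?thesis
      by simp
  qed
  show "(\<lambda>t. inverse (cosh ((t - c) / 2))) integrable_on {0..y}" for y
    by (intro integrable_continuous_interval continuous_intros) simp_all
  have integral_eq: "integral {0..y} (\<lambda>t. inverse (cosh ((t - c) / 2))) = F y - F 0" if "y \<ge> 0" for y
    using that
    by (intro integral_unique fundamental_theorem_of_calculus)
       (auto intro!: F'[THEN DERIV_subset] simp flip: has_real_derivative_iff_has_vector_derivative)
  have "filterlim (\<lambda>y. exp ((y - c) / 2)) at_top at_top"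
    by real_asymp
  then have "((\<lambda>y. arctan (exp ((y - c) / 2))) \<longlongrightarrow> pi / 2) at_top"
    using tendsto_arctan_at_top filterlim_compose by blast
  then have "((\<lambda>y. F y - F 0) \<longlongrightarrow> 4 * (pi / 2) - F 0) at_top"
    unfolding F_def by (intro tendsto_intros)
  then have lim: "((\<lambda>y. F y - F 0) \<longlongrightarrow> 2 * pi - 4 * arctan (exp (- c / 2))) at_top"
    by (simp add: F_def)
  show "((\<lambda>y. integral {0..y} (\<lambda>t. inverse (cosh ((t - c) / 2))))
          \<longlongrightarrow> 2 * pi - 4 * arctan (exp (- c / 2))) at_top"
    by (rule Lim_transform_eventually[OF lim])
       (auto simp: integral_eq eventually_at_top_linorder intro!: exI[of _ 0])
qed (simp add: less_imp_le)

lemma integral_inverse_cosh_le: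
  "integral {0..} (\<lambda>t. inverse (cosh ((t - c) / 2))) \<le> 2 * pi"
  using integral_unique[OF has_integral_inverse_cosh[of c]] arctan_monotone'[of 0 "exp (- c / 2)"]
  by simp

lemma add_abs_half_le_exp: "s + \<bar>s\<bar> / 2 \<le> exp (s :: real)"
proof (cases "s \<ge> 0")
  case True
  have "(1 + s / 2)\<^sup>2 \<le> (exp (s / 2))\<^sup>2"
    using True exp_ge_add_one_self[of "s / 2"] by (intro power_mono) auto
  moreover have "s + s / 2 \<le> (1 + s / 2)\<^sup>2"
    using sum_squares_ge_zero[of "s / 2 - 1 / 2" 0] by (simp add: power2_eq_square algebra_simps)
  ultimately show ?thesis
    using True by (simp flip: exp_double)
next
  case False
  then show ?thesis
    using exp_gt_zero[of s] by linarith
qed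

lemma exp_neg_abs_half_le_inverse_cosh: "exp (- \<bar>s\<bar> / 2) \<le> inverse (cosh (s / 2 :: real))"
proof -
  have "cosh (s / 2) \<le> exp (\<bar>s\<bar> / 2)"
    by (cases "s \<ge> 0") (simp_all add: cosh_field_def)
  then show ?thesis
    by (simp add: exp_minus le_imp_inverse_le)
qed

(* Laplace's method: the exponent m t - a e^t peaks at t = ln (m / a), and relative to the
   peak it decays at least like - |s| / 2 in s = t - ln (m / a). *)
lemma exp_mult_sub_exp_le:
  fixes a t :: real and m :: nat
  assumes "m \<ge> 1" and "a > 0"
  shows "exp (m * t - a * exp t)
           \<le> exp 1 * (m / (exp 1 * a)) ^ m * inverse (cosh ((t - ln (m / a)) / 2))"
proof -
  define c where "c = ln (m / a)"
  define s where "s = t - c"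
  have "exp c = m / a"
    using assms by (simp add: c_def)
  then have "a * exp t = m * exp s"
    using assms(2) by (simp add: s_def exp_diff field_simps)
  then have "m * t - a * exp t = m * (c - 1) + m * (1 + s - exp s)"
    by (simp add: s_def algebra_simps)
  also have "m * (1 + s - exp s) \<le> 1 + s - exp s"
    using mult_right_mono_neg[of 1 "real m" "1 + s - exp s"] assms(1) exp_ge_add_one_self[of s]
    by simp
  also have "1 + s - exp s \<le> 1 - \<bar>s\<bar> / 2"
    using add_abs_half_le_exp[of s] by linarith
  finally have "exp (m * t - a * exp t) \<le> exp (m * (c - 1)) * exp 1 * exp (- \<bar>s\<bar> / 2)"
    by (simp flip: exp_add)
  also have "\<dots> \<le> exp (m * (c - 1)) * exp 1 * inverse (cosh (s / 2))"
    by (intro mult_left_mono exp_neg_abs_half_le_inverse_cosh) simp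
  also have "exp (m * (c - 1)) = (m / (exp 1 * a)) ^ m"
  proof -
    have "exp (m * (c - 1)) = exp (c - 1) ^ m"
      by (rule exp_of_nat_mult)
    also have "exp (c - 1) = m / (exp 1 * a)"
      using \<open>exp c = m / a\<close> by (simp add: exp_diff)
    finally show ?thesis .
  qed
  finally show ?thesis
    by (simp add: s_def c_def mult_ac)
qed

lemma exp_mult_sub_sinh_le:
  fixes x t :: real and m :: nat
  assumes "m \<ge> 1" and "x > 0" and "t \<ge> 0"
  shows "exp (m * t - x * sinh t)
           \<le> exp (1 + x / 2) * (2 * real m / (exp 1 * x)) ^ m
               * inverse (cosh ((t - ln (2 * real m / x)) / 2))"
proof -
  have eq1: "real m / (exp 1 * (x / 2)) = 2 * real m / (exp 1 * x)"
    and eq2: "real m / (x / 2) = 2 * real m / x"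
    by simp_all
  have "x / 2 * exp t - x / 2 \<le> x * sinh t"
    using assms by (simp add: sinh_field_def field_simps)
  then have "exp (m * t - x * sinh t) \<le> exp (x / 2) * exp (m * t - x / 2 * exp t)"
    by (simp flip: exp_add)
  also have "\<dots> \<le> exp (x / 2) * (exp 1 * (m / (exp 1 * (x / 2))) ^ m
                              * inverse (cosh ((t - ln (m / (x / 2))) / 2)))"
    using assms by (intro mult_left_mono exp_mult_sub_exp_le) auto
  finally show ?thesis
    unfolding eq1 eq2 by (simp add: exp_add mult_ac)
qed

lemma integrable_on_halfline_if_dominated:
  fixes f g :: "real \<Rightarrow> real"
  assumes "continuous_on UNIV f" and "g integrable_on {0..}" and "\<And>t. t \<ge> 0 \<Longrightarrow> \<bar>f t\<bar> \<le> g t"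
  shows "f integrable_on {0..}" and "(LBINT t:{0<..}. f t) = integral {0..} f"
proof -
  have "f \<in> borel_measurable (lebesgue_on {0..})"
    using assms(1) by (intro continuous_imp_measurable_on_sets_lebesgue) (auto intro: continuous_on_subset)
  then have abs_int: "f absolutely_integrable_on {0..}"
    using assms(2,3) by (intro measurable_bounded_by_integrable_imp_absolutely_integrable) auto
  then show "f integrable_on {0..}"
    by (rule set_lebesgue_integral_eq_integral)
  have "(\<lambda>t. indicator {0<..} t *\<^sub>R f t) \<in> borel_measurable lborel"
    using borel_measurable_continuous_onI[OF assms(1)] by measurable
  moreover have "set_integrable lebesgue {0<..} f"
    by (rule set_integrable_subset[OF abs_int]) auto
  ultimately have "set_integrable lborel {0<..} f"
    unfolding set_integrable_def using integrable_completion by blast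
  then have "(LBINT t:{0<..}. f t) = integral {0<..} f"
    by (rule set_borel_integral_eq_integral)
  also have "\<dots> = integral {0..} f"
    by (rule integral_spike_set) (auto intro: negligible_subset[of "{0}"])
  finally show "(LBINT t:{0<..}. f t) = integral {0..} f" .
qed

lemma integral_dominated_by_exp_sub_sinh:
  fixes f :: "real \<Rightarrow> real" and x b :: real and m :: nat
  assumes "continuous_on UNIV f" and "x > 0" and "m \<ge> 1"
    and f_le: "\<And>t. t \<ge> 0 \<Longrightarrow> \<bar>f t\<bar> \<le> b * exp (real m * t - x * sinh t)"
  shows "f integrable_on {0..}" and "(LBINT t:{0<..}. f t) = integral {0..} f"
    and "\<bar>integral {0..} f\<bar> \<le> 2 * pi * b * exp (1 + x / 2) * (2 * real m / (exp 1 * x)) ^ m"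
proof -
  have "b \<ge> 0"
    using f_le[of 0] by simp
  define B where "B = b * exp (1 + x / 2) * (2 * real m / (exp 1 * x)) ^ m"
  define h where "h t = inverse (cosh ((t - ln (2 * real m / x)) / 2))" for t
  have "B \<ge> 0"
    using \<open>b \<ge> 0\<close> \<open>x > 0\<close> by (simp add: B_def)
  have "h integrable_on {0..}"
    using has_integral_inverse_cosh unfolding h_def by blast
  then have Bh_int: "(\<lambda>t. B * h t) integrable_on {0..}"
    using integrable_cmul[of h "{0..}" B] by simp
  have f_le_Bh: "\<bar>f t\<bar> \<le> B * h t" if "t \<ge> 0" for t
  proof -
    have "\<bar>f t\<bar> \<le> b * exp (real m * t - x * sinh t)"
      using that by (rule f_le)
    also have "\<dots> \<le> b * (exp (1 + x / 2) * (2 * real m / (exp 1 * x)) ^ m * h t)"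
      unfolding h_def using assms that \<open>b \<ge> 0\<close> by (intro mult_left_mono exp_mult_sub_sinh_le) auto
    finally show ?thesis
      by (simp add: B_def mult_ac)
  qed
  show "f integrable_on {0..}" and "(LBINT t:{0<..}. f t) = integral {0..} f"
    using integrable_on_halfline_if_dominated[OF assms(1) Bh_int f_le_Bh] by auto
  then have "\<bar>integral {0..} f\<bar> \<le> integral {0..} (\<lambda>t. B * h t)"
    using integral_norm_bound_integral[OF _ Bh_int, of f] f_le_Bh by auto
  also have "\<dots> \<le> B * (2 * pi)"
    using integral_inverse_cosh_le \<open>B \<ge> 0\<close> by (simp add: h_def mult_left_mono)
  finally show "\<bar>integral {0..} f\<bar> \<le> 2 * pi * b * exp (1 + x / 2) * (2 * real m / (exp 1 * x)) ^ m"
    by (simp add: B_def mult_ac)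
qed

section \<open>Bounds on the Bessel and Hankel functions\<close>

definition besselY_kernel :: "int \<Rightarrow> real \<Rightarrow> real \<Rightarrow> real" where
  "besselY_kernel n x t =
     (exp (real_of_int n * t) + (-1) powi n * exp (- real_of_int n * t)) * exp (- x * sinh t)"

lemma besselY_eq_kernel:
  "besselY n x = (1 / pi) * (LBINT t:{0..pi}. sin (x * sin t - real_of_int n * t))
                 - (1 / pi) * (LBINT t:{0<..}. besselY_kernel n x t)"
  by (simp add: besselY_def besselY_kernel_def)

lemma besselY_kernel_cases:
  "besselY_kernel n x t
     = 2 * (if even n then cosh (real_of_int n * t) else sinh (real_of_int n * t)) * exp (- x * sinh t)"
  by (simp add: besselY_kernel_def cosh_field_def sinh_field_def power_int_minus_left)

lemma continuous_besselY_kernel: "continuous_on UNIV (besselY_kernel n x)"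
  unfolding besselY_kernel_def by (intro continuous_intros)

lemma abs_cosh_le_exp_abs: "\<bar>cosh y\<bar> \<le> exp \<bar>y :: real\<bar>"
proof -
  have "exp y + exp (- y) \<le> exp \<bar>y\<bar> + exp \<bar>y\<bar>"
    by (intro add_mono) simp_all
  then show ?thesis
    unfolding abs_of_nonneg[OF cosh_real_nonneg] cosh_field_def by simp
qed

lemma abs_sinh_le_exp_abs: "\<bar>sinh y\<bar> \<le> exp \<bar>y :: real\<bar>"
proof -
  have "sinh y \<le> cosh y" and "- sinh y \<le> cosh y"
    using sinh_le_cosh_real[of y] sinh_le_cosh_real[of "- y"] by simp_all
  then show ?thesis
    using abs_cosh_le_exp_abs[of y] unfolding abs_le_iff abs_of_nonneg[OF cosh_real_nonneg] by linarith
qed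

lemma abs_besselY_kernel_le:
  assumes "t \<ge> 0"
  shows "\<bar>besselY_kernel n x t\<bar> \<le> 2 * exp (\<bar>real_of_int n\<bar> * t - x * sinh t)"
proof -
  have "\<bar>if even n then cosh (real_of_int n * t) else sinh (real_of_int n * t)\<bar>
          \<le> exp \<bar>real_of_int n * t\<bar>"
    using abs_cosh_le_exp_abs abs_sinh_le_exp_abs by simp
  also have "\<bar>real_of_int n * t\<bar> = \<bar>real_of_int n\<bar> * t"
    using assms by (simp add: abs_mult)
  finally show ?thesis
    unfolding besselY_kernel_cases abs_mult exp_diff
    by (simp add: exp_minus divide_inverse mult_right_mono)
qed

lemma besselY_kernel_ge:
  assumes "t \<ge> 0"
  shows "2 * sinh (\<bar>real_of_int n\<bar> * t) * exp (- x * sinh t)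
           \<le> (if even n then 1 else sgn (real_of_int n)) * besselY_kernel n x t"
proof -
  have "sinh (\<bar>real_of_int n\<bar> * t)
          \<le> (if even n then 1 else sgn (real_of_int n))
             * (if even n then cosh (real_of_int n * t) else sinh (real_of_int n * t))"
    using assms sinh_le_cosh_real[of "\<bar>real_of_int n\<bar> * t"]
    by (cases "n \<ge> 0") (auto simp: abs_mult sgn_if)
  then show ?thesis
    unfolding besselY_kernel_cases by (simp add: mult_ac)
qed

lemma abs_average_over_pi_le_1:
  fixes h :: "real \<Rightarrow> real"
  assumes "continuous_on UNIV h" and "\<And>t. \<bar>h t\<bar> \<le> 1"
  shows "\<bar>(1 / pi) * (LBINT t:{0..pi}. h t)\<bar> \<le> 1"
proof -
  have "set_integrable lborel {0..pi} h"
    by (intro borel_integrable_atLeastAtMost' continuous_on_subset[OF assms(1)]) auto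
  then have "(LBINT t:{0..pi}. h t) = integral {0..pi} h" and "h integrable_on {0..pi}"
    by (simp_all add: set_borel_integral_eq_integral)
  moreover have "norm (integral {0..pi} h) \<le> integral {0..pi} (\<lambda>_. 1 :: real)"
    using calculation(2) assms(2) by (intro integral_norm_bound_integral) auto
  ultimately show ?thesis
    by (simp add: abs_mult)
qed

lemma abs_besselJ_le_1: "\<bar>besselJ n x\<bar> \<le> 1"
  unfolding besselJ_def by (rule abs_average_over_pi_le_1) (intro continuous_intros, simp)

lemma abs_besselY_le:
  assumes "x > 0" and "m \<ge> 1" and "\<bar>real_of_int n\<bar> \<le> real m"
  shows "\<bar>besselY n x\<bar> \<le> 1 + 4 * exp (1 + x / 2) * (2 * real m / (exp 1 * x)) ^ m"
proof -
  have kernel_le: "\<bar>besselY_kernel n x t\<bar> \<le> 2 * exp (real m * t - x * sinh t)" if "t \<ge> 0" for t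
  proof -
    have "\<bar>real_of_int n\<bar> * t \<le> real m * t"
      using assms(3) that by (rule mult_right_mono)
    then show ?thesis
      by (intro order_trans[OF abs_besselY_kernel_le[OF that]]) simp
  qed
  note kernel_integral =
    integral_dominated_by_exp_sub_sinh[OF continuous_besselY_kernel assms(1,2) kernel_le]
  have "\<bar>(1 / pi) * (LBINT t:{0<..}. besselY_kernel n x t)\<bar>
          \<le> 4 * exp (1 + x / 2) * (2 * real m / (exp 1 * x)) ^ m"
    using kernel_integral(3) by (simp add: kernel_integral(2) abs_mult field_simps)
  moreover have "\<bar>(1 / pi) * (LBINT t:{0..pi}. sin (x * sin t - real_of_int n * t))\<bar> \<le> 1"
    by (rule abs_average_over_pi_le_1) (intro continuous_intros, simp)
  ultimately show ?thesis
    unfolding besselY_eq_kernel by linarith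
qed

lemma abs_integral_besselY_kernel_ge:
  assumes "x > 0" and kernel_int: "besselY_kernel n x integrable_on {0..}"
  shows "2 * sinh \<bar>real_of_int n\<bar> * exp (- x * sinh 2) \<le> \<bar>integral {0..} (besselY_kernel n x)\<bar>"
proof -
  define N where "N = \<bar>real_of_int n\<bar>"
  define \<sigma> where "\<sigma> = (if even n then 1 else sgn (real_of_int n))"
  \<comment> \<open>the sign \<sigma> makes the kernel nonnegative on t \<ge> 0, so the integral over [0, \<infinity>)
      dominates the one over [1, 2]\<close>
  define g where "g = (\<lambda>t. \<sigma> * besselY_kernel n x t)"
  have "N \<ge> 0" and "\<bar>\<sigma>\<bar> = 1"
    by (auto simp: N_def \<sigma>_def sgn_if)
  have g_ge: "2 * sinh (N * t) * exp (- x * sinh t) \<le> g t" if "t \<ge> 0" for t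
    using besselY_kernel_ge[OF that] by (simp add: g_def \<sigma>_def N_def)
  have g_nonneg: "0 \<le> g t" if "t \<ge> 0" for t
  proof -
    have "0 \<le> 2 * sinh (N * t) * exp (- x * sinh t)"
      using that \<open>N \<ge> 0\<close> by simp
    then show ?thesis
      using g_ge[OF that] by linarith
  qed
  have g_ge_const: "2 * sinh N * exp (- x * sinh 2) \<le> g t" if "t \<in> {1..2}" for t
  proof -
    have "sinh N \<le> sinh (N * t)" and "exp (- x * sinh 2) \<le> exp (- x * sinh t)"
      using that \<open>N \<ge> 0\<close> assms(1) by (auto simp: mult_le_cancel_left1)
    then have "2 * sinh N * exp (- x * sinh 2) \<le> 2 * sinh (N * t) * exp (- x * sinh t)"
      using \<open>N \<ge> 0\<close> by (intro mult_mono) auto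
    also have "\<dots> \<le> g t"
      using that by (intro g_ge) simp
    finally show ?thesis .
  qed
  have g_int: "g integrable_on {0..}"
    using integrable_cmul[OF kernel_int, of \<sigma>] by (simp add: g_def)
  have g_int12: "g integrable_on {1..2}"
    unfolding g_def
    by (intro integrable_continuous_interval continuous_intros
          continuous_on_subset[OF continuous_besselY_kernel]) simp
  have "2 * sinh N * exp (- x * sinh 2) \<le> integral {1..2} g"
    using g_ge_const integral_le[OF integrable_const_ivl g_int12, of "2 * sinh N * exp (- x * sinh 2)"]
    by simp
  also have "\<dots> \<le> integral {0..} g"
    using g_nonneg by (intro integral_subset_le[OF _ g_int12 g_int]) auto
  also have "\<dots> = \<sigma> * integral {0..} (besselY_kernel n x)"
    by (simp add: g_def)
  also have "\<dots> \<le> \<bar>integral {0..} (besselY_kernel n x)\<bar>"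
    using abs_ge_self[of "\<sigma> * integral {0..} (besselY_kernel n x)"] \<open>\<bar>\<sigma>\<bar> = 1\<close>
    by (simp add: abs_mult)
  finally show ?thesis
    unfolding N_def .
qed

lemma abs_besselY_ge_1:
  assumes "x > 0" and n_large: "2 * pi * exp (x * sinh 2) \<le> \<bar>real_of_int n\<bar>"
  shows "1 \<le> \<bar>besselY n x\<bar>"
proof -
  define N where "N = \<bar>real_of_int n\<bar>"
  have "1 \<le> exp (x * sinh 2)"
    using assms(1) by simp
  then have "1 * 1 \<le> 2 * pi * exp (x * sinh 2)"
    using pi_gt3 by (intro mult_mono) auto
  then have "N \<ge> 1"
    using n_large by (simp add: N_def)
  then have "nat \<bar>n\<bar> \<ge> 1" and N_nat: "real (nat \<bar>n\<bar>) = N"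
    by (auto simp: N_def)
  have "\<bar>besselY_kernel n x t\<bar> \<le> 2 * exp (real (nat \<bar>n\<bar>) * t - x * sinh t)" if "t \<ge> 0" for t
    using abs_besselY_kernel_le[OF that] by (simp add: N_nat N_def)
  note kernel_integral =
    integral_dominated_by_exp_sub_sinh[OF continuous_besselY_kernel assms(1) \<open>nat \<bar>n\<bar> \<ge> 1\<close> this]
  have "2 * pi \<le> N * exp (- x * sinh 2)"
  proof -
    have "2 * pi * exp (x * sinh 2) * exp (- x * sinh 2) \<le> N * exp (- x * sinh 2)"
      using n_large by (intro mult_right_mono) (simp_all add: N_def)
    then show ?thesis
      by (simp add: mult.assoc flip: exp_add)
  qed
  also have "\<dots> \<le> 2 * sinh N * exp (- x * sinh 2)"
  proof -
    have "(1 + N) - 1 \<le> exp N - exp (- N)"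
      using \<open>N \<ge> 1\<close> by (intro diff_mono exp_ge_add_one_self) simp
    then have "N \<le> exp N - exp (- N)"
      by simp
    then show ?thesis
      by (intro mult_right_mono) (simp_all add: sinh_field_def)
  qed
  also have "\<dots> \<le> \<bar>integral {0..} (besselY_kernel n x)\<bar>"
    unfolding N_def using assms(1) kernel_integral(1) by (rule abs_integral_besselY_kernel_ge)
  finally have "2 \<le> \<bar>(1 / pi) * (LBINT t:{0<..}. besselY_kernel n x t)\<bar>"
    by (simp add: kernel_integral(2) abs_mult field_simps)
  moreover have "\<bar>(1 / pi) * (LBINT t:{0..pi}. sin (x * sin t - real_of_int n * t))\<bar> \<le> 1"
    by (rule abs_average_over_pi_le_1) (intro continuous_intros, simp)
  ultimately show ?thesis
    unfolding besselY_eq_kernel by linarith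
qed

lemma norm_dcoef: "cmod (dcoef k0 R n) = cmod (hankel1 n (k0 * R)) / 4"
  by (simp add: dcoef_def norm_mult)

lemma norm_dcoef_le:
  assumes "k0 * R > 0" and "m \<ge> 1" and "\<bar>real_of_int n\<bar> \<le> real m"
  shows "cmod (dcoef k0 R n) \<le> 1 / 2 + exp (1 + k0 * R / 2) * (2 * real m / (exp 1 * (k0 * R))) ^ m"
proof -
  have "cmod (hankel1 n (k0 * R)) \<le> \<bar>besselJ n (k0 * R)\<bar> + \<bar>besselY n (k0 * R)\<bar>"
    using cmod_le[of "hankel1 n (k0 * R)"] by (simp add: hankel1_def)
  then show ?thesis
    using abs_besselJ_le_1[of n "k0 * R"] abs_besselY_le[OF assms] by (simp add: norm_dcoef)
qed

lemma norm_dcoef_ge: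
  assumes "k0 * R > 0" and "2 * pi * exp (k0 * R * sinh 2) \<le> \<bar>real_of_int n\<bar>"
  shows "1 / 4 \<le> cmod (dcoef k0 R n)"
proof -
  have "\<bar>besselY n (k0 * R)\<bar> \<le> cmod (hankel1 n (k0 * R))"
    using abs_Im_le_cmod[of "hankel1 n (k0 * R)"] by (simp add: hankel1_def)
  then show ?thesis
    using abs_besselY_ge_1[OF assms] by (simp add: norm_dcoef)
qed

section \<open>Growth of the condition number\<close>

lemma Max_div_Min_le_if_bounded_below_eventually:
  fixes d :: "int \<Rightarrow> real" and f :: "nat \<Rightarrow> real" and N0 K0 :: nat
  assumes d_nonneg: "\<And>n. 0 \<le> d n"
    and d_ge: "\<And>n. int N0 \<le> \<bar>n\<bar> \<Longrightarrow> \<delta> \<le> d n" and "\<delta> > 0"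
    and d_le: "\<And>K n. K \<ge> K0 \<Longrightarrow> \<bar>n\<bar> \<le> int K \<Longrightarrow> d n \<le> f K"
    and "N0 \<le> K0"
  shows "\<exists>C > 0. \<forall>K \<ge> K0. (MAX n\<in>{-int K..int K}. d n) / (MIN n\<in>{-int K..int K}. d n) \<le> C * f K"
proof -
  have f_nonneg: "0 \<le> f K" if "K \<ge> K0" for K
    using d_nonneg[of 0] d_le[OF that, of 0] by simp
  have Max_le: "(MAX n\<in>{-int K..int K}. d n) \<le> f K" if "K \<ge> K0" for K
    using d_le[OF that] by (simp add: abs_le_iff)
  show ?thesis
  proof (cases "\<exists>n\<in>{-int N0..int N0}. d n = 0")
    case True
    then obtain n0 where n0: "n0 \<in> {-int N0..int N0}" "d n0 = 0"
      by blast
    show ?thesis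
    proof (intro exI[of _ 1] conjI allI impI)
      fix K assume "K \<ge> K0"
      then have "n0 \<in> {-int K..int K}"
        using n0(1) \<open>N0 \<le> K0\<close> by auto
      then have "(MIN n\<in>{-int K..int K}. d n) \<le> 0"
        using n0(2) by (metis Min_le finite_atLeastAtMost_int finite_imageI image_eqI)
      then have "(MIN n\<in>{-int K..int K}. d n) = 0"
        using d_nonneg by (intro antisym) (auto simp: Min_ge_iff)
      \<comment> \<open>no nonvanishing of d is needed: the quotient is then 0, as x / 0 = 0\<close>
      then show "(MAX n\<in>{-int K..int K}. d n) / (MIN n\<in>{-int K..int K}. d n) \<le> 1 * f K"
        using f_nonneg[OF \<open>K \<ge> K0\<close>] by simp
    qed simp
  next
    case False
    define c0 where "c0 = min \<delta> (MIN n\<in>{-int N0..int N0}. d n)"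
    have "0 < d n" if "n \<in> {-int N0..int N0}" for n
    proof -
      have "d n \<noteq> 0"
        using False that by auto
      then show ?thesis
        using d_nonneg[of n] by linarith
    qed
    then have "c0 > 0"
      using \<open>\<delta> > 0\<close> by (simp add: c0_def Min_gr_iff)
    have "c0 \<le> d n" for n
    proof (cases "int N0 \<le> \<bar>n\<bar>")
      case True
      then show ?thesis
        using d_ge[OF True] by (simp add: c0_def)
    next
      case False
      then have "n \<in> {-int N0..int N0}"
        by (simp add: not_le abs_less_iff)
      then have "(MIN n\<in>{-int N0..int N0}. d n) \<le> d n"
        by (intro Min_le imageI) auto
      then show ?thesis
        by (simp add: c0_def min.coboundedI2)
    qed
    then have Min_ge: "c0 \<le> (MIN n\<in>{-int K..int K}. d n)" for K
      by (simp add: Min_ge_iff)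
    show ?thesis
    proof (intro exI[of _ "1 / c0"] conjI allI impI)
      fix K assume "K \<ge> K0"
      have "(MAX n\<in>{-int K..int K}. d n) / (MIN n\<in>{-int K..int K}. d n) \<le> f K / c0"
        by (rule frac_le[OF f_nonneg Max_le \<open>c0 > 0\<close> Min_ge]) (use \<open>K \<ge> K0\<close> in simp_all)
      then show "(MAX n\<in>{-int K..int K}. d n) / (MIN n\<in>{-int K..int K}. d n) \<le> 1 / c0 * f K"
        by simp
    qed (use \<open>c0 > 0\<close> in simp)
  qed
qed

lemma Max_div_Min_norm_dcoef_le:
  assumes "k0 > 0" and "R > 0"
  shows "\<exists>C > 0. \<exists>K0. \<forall>K \<ge> K0.
           (MAX n\<in>{-int K..int K}. cmod (dcoef k0 R n)) / (MIN n\<in>{-int K..int K}. cmod (dcoef k0 R n))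
             \<le> C * ((2 / (exp 1 * k0 * R)) * real K) ^ K"
proof -
  define x where "x = k0 * R"
  define B where "B = 1 / 2 + exp (1 + x / 2)"
  define N0 where "N0 = nat \<lceil>2 * pi * exp (x * sinh 2)\<rceil>"
  define K0 where "K0 = max N0 (max 1 (nat \<lceil>exp 1 * x / 2\<rceil>))"
  have "x > 0"
    using assms by (simp add: x_def)
  have q_eq: "(2 / (exp 1 * k0 * R)) * real K = 2 * real K / (exp 1 * x)" for K
    by (simp add: x_def)
  have dcoef_le: "cmod (dcoef k0 R n) \<le> B * ((2 / (exp 1 * k0 * R)) * real K) ^ K"
    if "K \<ge> K0" and "\<bar>n\<bar> \<le> int K" for K n
  proof -
    have "K \<ge> 1" and "exp 1 * x / 2 \<le> real K"
      using that(1) by (auto simp: K0_def)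
    then have "1 \<le> (2 * real K / (exp 1 * x)) ^ K"
      using \<open>x > 0\<close> by (intro one_le_power) (simp add: field_simps)
    moreover have "cmod (dcoef k0 R n) \<le> 1 / 2 + exp (1 + x / 2) * (2 * real K / (exp 1 * x)) ^ K"
      using norm_dcoef_le[of k0 R K n] \<open>x > 0\<close> \<open>K \<ge> 1\<close> that(2) by (simp add: x_def)
    ultimately show ?thesis
      unfolding q_eq B_def distrib_right by linarith
  qed
  have dcoef_ge: "1 / 4 \<le> cmod (dcoef k0 R n)" if "int N0 \<le> \<bar>n\<bar>" for n
  proof -
    have "2 * pi * exp (x * sinh 2) \<le> real N0"
      unfolding N0_def by (rule real_nat_ceiling_ge)
    also have "real N0 \<le> \<bar>real_of_int n\<bar>"
      using that by (metis of_int_abs of_int_le_iff of_int_of_nat_eq)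
    finally show ?thesis
      using norm_dcoef_ge[of k0 R n] \<open>x > 0\<close> by (simp add: x_def)
  qed
  have "N0 \<le> K0"
    by (simp add: K0_def)
  have "\<exists>C > 0. \<forall>K \<ge> K0.
      (MAX n\<in>{-int K..int K}. cmod (dcoef k0 R n)) / (MIN n\<in>{-int K..int K}. cmod (dcoef k0 R n))
        \<le> C * (B * ((2 / (exp 1 * k0 * R)) * real K) ^ K)"
    by (rule Max_div_Min_le_if_bounded_below_eventually[where \<delta> = "1 / 4"])
       (use dcoef_ge dcoef_le \<open>N0 \<le> K0\<close> in auto)
  then obtain C where "C > 0" and C: "\<forall>K \<ge> K0.
      (MAX n\<in>{-int K..int K}. cmod (dcoef k0 R n)) / (MIN n\<in>{-int K..int K}. cmod (dcoef k0 R n))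
        \<le> C * (B * ((2 / (exp 1 * k0 * R)) * real K) ^ K)"
    by blast
  moreover have "B > 0"
    by (simp add: B_def add_pos_pos)
  ultimately show ?thesis
    using C by (intro exI[of _ "C * B"] conjI exI[of _ K0]) (simp_all add: mult.assoc)
qed

theorem mainTheorem8:
  fixes k0 R :: real
  assumes "k0 > 0" and "R > 0"
  shows "\<exists>C > 0. \<exists>K0. \<forall>K \<ge> K0. \<forall>Ns Nr. \<forall>z0 :: real \<times> real.
           Ns \<ge> 2 * K + 1 \<longrightarrow> Nr \<ge> 2 * K + 1 \<longrightarrow>
           condL k0 R z0 K Ns Nr
             = (MAX n \<in> {-int K..int K}. cmod (dcoef k0 R n))
               / (MIN n \<in> {-int K..int K}. cmod (dcoef k0 R n))
         \<and> (MAX n \<in> {-int K..int K}. cmod (dcoef k0 R n))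
               / (MIN n \<in> {-int K..int K}. cmod (dcoef k0 R n))
             \<le> C * ((2 / (exp 1 * k0 * R)) * real K) ^ K"
proof -
  obtain C K0 where "C > 0" and bound: "\<forall>K \<ge> K0.
      (MAX n\<in>{-int K..int K}. cmod (dcoef k0 R n)) / (MIN n\<in>{-int K..int K}. cmod (dcoef k0 R n))
        \<le> C * ((2 / (exp 1 * k0 * R)) * real K) ^ K"
    using Max_div_Min_norm_dcoef_le[OF assms] by blast
  show ?thesis
  proof (intro exI[of _ C] conjI \<open>C > 0\<close> exI[of _ K0] allI impI)
    fix K Ns Nr and z0 :: "real \<times> real"
    assume "K \<ge> K0" and "Ns \<ge> 2 * K + 1" and "Nr \<ge> 2 * K + 1"
    then show "condL k0 R z0 K Ns Nr
        = (MAX n\<in>{-int K..int K}. cmod (dcoef k0 R n)) / (MIN n\<in>{-int K..int K}. cmod (dcoef k0 R n))"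
      and "(MAX n\<in>{-int K..int K}. cmod (dcoef k0 R n)) / (MIN n\<in>{-int K..int K}. cmod (dcoef k0 R n))
        \<le> C * ((2 / (exp 1 * k0 * R)) * real K) ^ K"
      using condL_eq_Max_div_Min bound by simp_all
  qed
qed

end
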